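(* Let $t\ge 1$ and $t\le k\le v$, $\lambda\ge 1$ be integers, and suppose there exists a $t$-$(v,k,\lambda)$ design whose number of blocks $b=\lambda\binom{v}{t}/\binom{k}{t}$ is divisible by $v$. Then there exists an authentication system with $k$ source states, $v$ messages and $b$ encoding rules which, when the source states are equiprobable and the encoding rules are used with equal probability, has perfect secrecy and is $(t-1)$-fold secure against spoofing. Moreover, this system is optimal (i.e. $b=\binom{v}{t}/\binom{k}{t}$) if and only if $\lambda=1$.
   Context: A $t$-$(v,k,\lambda)$ design is a pair $(X,\mathcal{B})$ where $X$ is a set of $v$ points and $\mathcal{B}$ is a collection of distinct $k$-subsets of $X$ (blocks; no repeated blocks allowed) such that every $t$-subset of $X$ is contained in exactly $\lambda$ blocks; $b=|\mathcal{B}|$. Authentication system: finite sets $\mathcal{S}$ of $k$ source states, $\mathcal{M}$ of $v$ messages, $\mathcal{E}$ of $b$ encoding rules, each $e\in\mathcal{E}$ an injective map $\mathcal{S}\to\mathcal{M}$; $M(e)=\{e(s):s\in\mathcal{S}\}$ is the set of messages valid (accepted) under $e$. A key $e$ is drawn according to a distribution $p_E$ on $\mathcal{E}$, source states according to $p_S$, independently; "equiprobable source states" means source states are independent and uniformly distributed, and for each $i$ every $i$-subset of distinct source states is equally likely to be the set of sent source states. Perfect secrecy: $p_S(s\mid m)=p_S(s)$ for every $s\in\mathcal{S}$ and every message $m$ (equivalently, $\sum_{e:\,e(s)=m}p_E(e)=\sum_{e:\,m\in M(e)}p_E(e)p_S(e^{-1}(m))$ for all $s,m$). Spoofing attack of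 order $i$: the opponent observes $i\ge 0$ distinct messages produced from $i$ distinct source states under the same secret key $e$, and then sends a new message distinct from these; he succeeds if it lies in $M(e)$. The deception probability $P_{d_i}$ is the maximum success probability over all opponent strategies. One always has $P_{d_i}\ge (k-i)/(v-i)$, and the system is called $t$-fold secure against spoofing if $P_{d_i}=(k-i)/(v-i)$ for all $0\le i\le t$. A $(t-1)$-fold secure system always has $b\ge \binom{v}{t}/\binom{k}{t}$; it is called optimal when equality holds. *)

theory Defs
  imports Complex_Main "HOL-Library.FuncSet"
begin

text \<open>A t-(v,k,lambda) design on the point set X with block set Bs (a set of
  blocks, so no repeated blocks).\<close>
definition t_design :: "nat \<Rightarrow> nat \<Rightarrow> nat \<Rightarrow> nat \<Rightarrow> 'a set \<Rightarrow> 'a set set \<Rightarrow> bool" where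
  "t_design t v k lam X Bs \<longleftrightarrow>
     finite X \<and> card X = v \<and>
     (\<forall>B\<in>Bs. B \<subseteq> X \<and> card B = k) \<and>
     (\<forall>T. T \<subseteq> X \<and> card T = t \<longrightarrow> card {B\<in>Bs. T \<subseteq> B} = lam)"

definition auth_system :: "'s set \<Rightarrow> 'm set \<Rightarrow> 'e set \<Rightarrow> ('e \<Rightarrow> 's \<Rightarrow> 'm) \<Rightarrow> bool" where
  "auth_system S M E enc \<longleftrightarrow>
     finite S \<and> finite M \<and> finite E \<and>
     (\<forall>e\<in>E. inj_on (enc e) S \<and> enc e ` S \<subseteq> M) \<and>
     inj_on (\<lambda>e. restrict (enc e) S) E"

definition perfect_secrecy ::
  "'s set \<Rightarrow> 'm set \<Rightarrow> 'e set \<Rightarrow> ('e \<Rightarrow> 's \<Rightarrow> 'm) \<Rightarrow> ('e \<Rightarrow> real) \<Rightarrow> ('s \<Rightarrow> real) \<Rightarrow> bool" where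
  "perfect_secrecy S M E enc pE pS \<longleftrightarrow>
     (\<forall>s\<in>S. \<forall>m\<in>M.
        (\<Sum>e\<in>{e\<in>E. enc e s = m}. pE e) =
        (\<Sum>e\<in>{e\<in>E. m \<in> enc e ` S}. pE e * pS (the_inv_into S (enc e) m)))"

text \<open>Joint probability that the opponent observes the set Y of messages
  (produced from distinct source states under one key) and that m is valid
  under that key. pT T is the probability that T is the set of sent source states.\<close>
definition spoof_joint ::
  "'s set \<Rightarrow> 'e set \<Rightarrow> ('e \<Rightarrow> 's \<Rightarrow> 'm) \<Rightarrow> ('e \<Rightarrow> real) \<Rightarrow> ('s set \<Rightarrow> real) \<Rightarrow> 'm set \<Rightarrow> 'm \<Rightarrow> real" where
  "spoof_joint S E enc pE pT Y m =
     (\<Sum>e\<in>{e\<in>E. insert m Y \<subseteq> enc e ` S}. pE e * pT (the_inv_into S (enc e) ` Y))"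

text \<open>Deception probability of order i: the success probability of an optimal
  opponent, who for every observation Y chooses the best new message m \<notin> Y.\<close>
definition deception_prob ::
  "'s set \<Rightarrow> 'm set \<Rightarrow> 'e set \<Rightarrow> ('e \<Rightarrow> 's \<Rightarrow> 'm) \<Rightarrow> ('e \<Rightarrow> real) \<Rightarrow> ('s set \<Rightarrow> real) \<Rightarrow> nat \<Rightarrow> real" where
  "deception_prob S M E enc pE pT i =
     (\<Sum>Y\<in>{Y. Y \<subseteq> M \<and> card Y = i}. Max ((\<lambda>m. spoof_joint S E enc pE pT Y m) ` (M - Y)))"

definition fold_secure ::
  "'s set \<Rightarrow> 'm set \<Rightarrow> 'e set \<Rightarrow> ('e \<Rightarrow> 's \<Rightarrow> 'm) \<Rightarrow> ('e \<Rightarrow> real) \<Rightarrow> ('s set \<Rightarrow> real) \<Rightarrow> nat \<Rightarrow> bool" where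
  "fold_secure S M E enc pE pT t \<longleftrightarrow>
     (\<forall>i\<le>t. deception_prob S M E enc pE pT i =
              (real (card S) - real i) / (real (card M) - real i))"

definition optimal_system :: "'s set \<Rightarrow> 'm set \<Rightarrow> 'e set \<Rightarrow> nat \<Rightarrow> bool" where
  "optimal_system S M E t \<longleftrightarrow>
     real (card E) = real (card M choose t) / real (card S choose t)"

end

theory Submission
  imports Defs
begin

(* Given a t-(v, k, lam) design with v dividing b, we order every block B as
   f B 0, ..., f B (k - 1) so that each point appears at each position in exactly b / v blocks.
   Taking the positions {0..<k} as source states, the points as messages and the ordered
   blocks as encoding rules gives the required authentication system:
   - the balanced orderings make the number of rules encoding s as m independent of s,
     which yields perfect secrecy under uniform distributions;
   - the sets of valid messages are the blocks, and a t-design is an (i + 1)-design for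
     i < t, so every spoofing attack of order i succeeds with probability (k - i) / (v - i);
   - b * C(k, t) = lam * C(v, t) shows optimality holds exactly when lam = 1.
   The balanced orderings are obtained by repeatedly extracting balanced choice functions
   from the point-block incidence graph, using Hall's marriage theorem, which is proved first. *)

definition sdr :: "'i set \<Rightarrow> ('i \<Rightarrow> 'b set) \<Rightarrow> ('i \<Rightarrow> 'b) \<Rightarrow> bool" where
  "sdr I F f \<longleftrightarrow> (\<forall>i\<in>I. f i \<in> F i) \<and> inj_on f I"

definition hall_condition :: "'i set \<Rightarrow> ('i \<Rightarrow> 'b set) \<Rightarrow> bool" where
  "hall_condition I F \<longleftrightarrow> (\<forall>J\<subseteq>I. card J \<le> card (\<Union>(F ` J)))"

lemma sdr_glue:
  assumes f1: "sdr J F f1" and f2: "sdr K G f2" and disj: "J \<inter> K = {}"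
    and sub: "\<forall>i\<in>K. G i \<subseteq> F i" and avoid: "\<forall>i\<in>K. G i \<inter> \<Union>(F ` J) = {}"
  shows "sdr (J \<union> K) F (\<lambda>i. if i \<in> J then f1 i else f2 i)"
  unfolding sdr_def
proof (intro conjI ballI inj_onI)
  fix i assume "i \<in> J \<union> K"
  then show "(if i \<in> J then f1 i else f2 i) \<in> F i" using f1 f2 sub unfolding sdr_def by auto
next
  fix i j assume ij: "i \<in> J \<union> K" "j \<in> J \<union> K"
    and eq: "(if i \<in> J then f1 i else f2 i) = (if j \<in> J then f1 j else f2 j)"
  have separated: "f1 j \<noteq> f2 i" if "j \<in> J" "i \<in> K" for i j
  proof -
    have "f1 j \<in> \<Union>(F ` J)" using f1 that(1) unfolding sdr_def by auto
    moreover have "f2 i \<notin> \<Union>(F ` J)" using f2 avoid that(2) unfolding sdr_def by blast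
    ultimately show ?thesis by auto
  qed
  show "i = j"
    using ij eq separated[of i j] separated[of j i] f1 f2 unfolding sdr_def
    by (auto split: if_splits dest: inj_onD)
qed

(* Inductive step of Hall's theorem when some proper nonempty subfamily J is critical
   (card J = card of its union): match J inside its union, and match the rest of the family
   outside that union, where Hall's condition still holds. *)
lemma hall_critical_step:
  fixes I :: "'i set" and F :: "'i \<Rightarrow> 'b set"
  assumes IH: "\<And>(I' :: 'i set) (F' :: 'i \<Rightarrow> 'b set). card I' < card I \<Longrightarrow> finite I' \<Longrightarrow> \<forall>i\<in>I'. finite (F' i) \<Longrightarrow>
                 hall_condition I' F' \<Longrightarrow> \<exists>f. sdr I' F' f"
    and fin: "finite I" "\<forall>i\<in>I. finite (F i)" and hall: "hall_condition I F"
    and J: "J \<subset> I" "J \<noteq> {}" "card J = card (\<Union>(F ` J))"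
  shows "\<exists>f. sdr I F f"
proof -
  define U where "U = \<Union>(F ` J)"
  have fJ: "finite J" using J fin finite_subset by auto
  have fU: "finite U" unfolding U_def using fJ J fin by auto
  obtain f1 where f1: "sdr J F f1"
    using IH[of J F] psubset_card_mono[OF fin(1) J(1)] fJ fin J hall
    unfolding hall_condition_def by auto
  have "hall_condition (I - J) (\<lambda>i. F i - U)"
    unfolding hall_condition_def
  proof (intro allI impI)
    fix K assume K: "K \<subseteq> I - J"
    have fK: "finite K" using finite_subset[OF K finite_Diff[OF fin(1)]] .
    have split: "\<Union>(F ` (K \<union> J)) = \<Union>((\<lambda>i. F i - U) ` K) \<union> U" unfolding U_def by auto
    have "card K + card J = card (K \<union> J)" using K fK fJ by (subst card_Un_disjoint) auto
    also have "\<dots> \<le> card (\<Union>(F ` (K \<union> J)))"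
      using hall K J(1) unfolding hall_condition_def by blast
    also have "\<dots> = card (\<Union>((\<lambda>i. F i - U) ` K)) + card U"
      unfolding split using fK K fin fU by (subst card_Un_disjoint) auto
    finally show "card K \<le> card (\<Union>((\<lambda>i. F i - U) ` K))" using J(3) unfolding U_def by simp
  qed
  moreover have "card (I - J) < card I"
  proof -
    have "card J > 0" using J(2) fJ by auto
    then show ?thesis using J(1) fJ psubset_card_mono[OF fin(1) J(1)]
      by (simp add: card_Diff_subset psubset_imp_subset)
  qed
  ultimately obtain f2 where f2: "sdr (I - J) (\<lambda>i. F i - U) f2"
    using IH[of "I - J" "\<lambda>i. F i - U"] fin by blast
  have "sdr (J \<union> (I - J)) F (\<lambda>i. if i \<in> J then f1 i else f2 i)"
    by (rule sdr_glue[OF f1 f2]) (auto simp: U_def)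
  moreover have "J \<union> (I - J) = I" using J by auto
  ultimately show ?thesis by auto
qed

(* Inductive step when every proper nonempty subfamily has a surplus: any element x of some
   F i0 may be assigned to i0, since removing x keeps Hall's condition for the remaining family. *)
lemma hall_surplus_step:
  fixes I :: "'i set" and F :: "'i \<Rightarrow> 'b set"
  assumes IH: "\<And>(I' :: 'i set) (F' :: 'i \<Rightarrow> 'b set). card I' < card I \<Longrightarrow> finite I' \<Longrightarrow> \<forall>i\<in>I'. finite (F' i) \<Longrightarrow>
                 hall_condition I' F' \<Longrightarrow> \<exists>f. sdr I' F' f"
    and fin: "finite I" "\<forall>i\<in>I. finite (F i)" and hall: "hall_condition I F"
    and i0: "i0 \<in> I" and surplus: "\<forall>J. J \<subset> I \<and> J \<noteq> {} \<longrightarrow> card J < card (\<Union>(F ` J))"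
  shows "\<exists>f. sdr I F f"
proof -
  have "card {i0} \<le> card (\<Union>(F ` {i0}))" using hall i0 unfolding hall_condition_def by blast
  then obtain x where x: "x \<in> F i0" by fastforce
  have "hall_condition (I - {i0}) (\<lambda>i. F i - {x})"
    unfolding hall_condition_def
  proof (intro allI impI)
    fix K assume K: "K \<subseteq> I - {i0}"
    show "card K \<le> card (\<Union>((\<lambda>i. F i - {x}) ` K))"
    proof (cases "K = {}")
      case False
      then have "card K < card (\<Union>(F ` K))" using surplus K i0 by blast
      moreover have "\<Union>((\<lambda>i. F i - {x}) ` K) = \<Union>(F ` K) - {x}" by auto
      ultimately show ?thesis by (auto simp: card_Diff_singleton_if)
    qed simp
  qed
  moreover have "card (I - {i0}) < card I" using fin(1) i0 by (rule card_Diff1_less)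
  ultimately obtain f' where f': "sdr (I - {i0}) (\<lambda>i. F i - {x}) f'"
    using IH[of "I - {i0}" "\<lambda>i. F i - {x}"] fin by blast
  have "sdr I F (f'(i0 := x))"
    using f' x i0 unfolding sdr_def inj_on_def by auto
  then show ?thesis by blast
qed

theorem hall_marriage:
  assumes "finite I" "\<forall>i\<in>I. finite (F i)" "hall_condition I F"
  shows "\<exists>f. sdr I F f"
  using assms
proof (induction "card I" arbitrary: I F rule: less_induct)
  case less
  show ?case
  proof (cases "\<exists>J. J \<subset> I \<and> J \<noteq> {} \<and> card J = card (\<Union>(F ` J))")
    case True
    then obtain J where "J \<subset> I" "J \<noteq> {}" "card J = card (\<Union>(F ` J))" by blast
    then show ?thesis using hall_critical_step[OF less.hyps less.prems] by blast
  next
    case False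
    show ?thesis
    proof (cases "I = {}")
      case True then show ?thesis by (auto simp: sdr_def)
    next
      case nonempty: False
      then obtain i0 where "i0 \<in> I" by blast
      moreover have "\<forall>J. J \<subset> I \<and> J \<noteq> {} \<longrightarrow> card J < card (\<Union>(F ` J))"
        using False less.prems(3) unfolding hall_condition_def by (auto simp: order_less_le)
      ultimately show ?thesis using hall_surplus_step[OF less.hyps less.prems] by blast
    qed
  qed
qed

lemma double_counting:
  assumes "finite A" "finite P"
  shows "(\<Sum>a\<in>A. card {p\<in>P. R a p}) = (\<Sum>p\<in>P. card {a\<in>A. R a p})"
  by (rule sum_multicount_gen) (use assms in auto)

lemma fibres_exact:
  assumes fA: "finite A" and fP: "finite P" and gP: "g ` A \<subseteq> P"
    and le: "\<forall>p\<in>P. card {a\<in>A. g a = p} \<le> q" and cA: "card A = card P * q"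
  shows "\<forall>p\<in>P. card {a\<in>A. g a = p} = q"
proof -
  have "(\<Sum>p\<in>P. card {a\<in>A. g a = p}) = (\<Sum>a\<in>A. card {p\<in>P. g a = p})"
    by (rule double_counting[OF fA fP, symmetric])
  also have "\<dots> = (\<Sum>a\<in>A. 1)"
  proof (rule sum.cong[OF refl])
    fix a assume "a \<in> A"
    then have "{p\<in>P. g a = p} = {g a}" using gP by auto
    then show "card {p\<in>P. g a = p} = 1" by simp
  qed
  also have "\<dots> = (\<Sum>p\<in>P. q)" using cA by simp
  finally have sums: "(\<Sum>p\<in>P. card {a\<in>A. g a = p}) = (\<Sum>p\<in>P. q)" .
  show ?thesis
  proof
    fix p assume "p \<in> P"
    show "card {a\<in>A. g a = p} = q" by (rule sum_mono_inv[OF sums _ \<open>p \<in> P\<close> fP]) (use le in auto)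
  qed
qed

lemma biregular_card:
  assumes fA: "finite A" and fP: "finite P" and N: "\<forall>a\<in>A. N a \<subseteq> P \<and> card (N a) = d"
    and deg: "\<forall>p\<in>P. card {a\<in>A. p \<in> N a} = d * q" and d: "d > 0"
  shows "card A = card P * q"
proof -
  have "d * card A = (\<Sum>a\<in>A. card {p\<in>P. p \<in> N a})"
  proof -
    have "\<forall>a\<in>A. {p\<in>P. p \<in> N a} = N a" using N by auto
    then show ?thesis using N by (simp add: mult.commute)
  qed
  also have "\<dots> = (\<Sum>p\<in>P. card {a\<in>A. p \<in> N a})" by (rule double_counting[OF fA fP])
  also have "\<dots> = d * (card P * q)" using deg by simp
  finally show ?thesis using d by simp
qed

lemma blowup_hall_condition:
  assumes fA: "finite A" and fP: "finite P" and N: "\<forall>a\<in>A. N a \<subseteq> P \<and> card (N a) = d"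
    and deg: "\<forall>p\<in>P. card {a\<in>A. p \<in> N a} = d * q" and d: "d > 0"
  shows "hall_condition A (\<lambda>a. N a \<times> {0..<q})"
  unfolding hall_condition_def
proof (intro allI impI)
  fix J assume J: "J \<subseteq> A"
  define U where "U = \<Union>(N ` J)"
  have UP: "U \<subseteq> P" using N J unfolding U_def by auto
  have fJ: "finite J" and fU: "finite U" using J fA UP fP finite_subset by auto
  have "d * card J = (\<Sum>a\<in>J. card {p\<in>U. p \<in> N a})"
  proof -
    have "\<forall>a\<in>J. {p\<in>U. p \<in> N a} = N a" unfolding U_def by auto
    then show ?thesis using N J by (simp add: subset_iff mult.commute)
  qed
  also have "\<dots> = (\<Sum>p\<in>U. card {a\<in>J. p \<in> N a})" by (rule double_counting[OF fJ fU])
  also have "\<dots> \<le> (\<Sum>p\<in>U. d * q)"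
  proof (rule sum_mono)
    fix p assume "p \<in> U"
    have "card {a\<in>J. p \<in> N a} \<le> card {a\<in>A. p \<in> N a}" using J fA by (intro card_mono) auto
    then show "card {a\<in>J. p \<in> N a} \<le> d * q" using deg UP \<open>p \<in> U\<close> by auto
  qed
  finally have "card J \<le> card U * q" using d by (simp add: algebra_simps)
  moreover have "\<Union>((\<lambda>a. N a \<times> {0..<q}) ` J) = U \<times> {0..<q}" unfolding U_def by auto
  ultimately show "card J \<le> card (\<Union>((\<lambda>a. N a \<times> {0..<q}) ` J))"
    by (simp add: card_cartesian_product)
qed

lemma balanced_choice:
  assumes fA: "finite A" and fP: "finite P" and N: "\<forall>a\<in>A. N a \<subseteq> P \<and> card (N a) = d"
    and deg: "\<forall>p\<in>P. card {a\<in>A. p \<in> N a} = d * q" and d: "d > 0"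
  shows "\<exists>g. (\<forall>a\<in>A. g a \<in> N a) \<and> (\<forall>p\<in>P. card {a\<in>A. g a = p} = q)"
proof -
  have "\<forall>a\<in>A. finite (N a \<times> {0..<q})" using N fP finite_subset by blast
  then obtain h where h: "sdr A (\<lambda>a. N a \<times> {0..<q}) h"
    using hall_marriage[OF fA _ blowup_hall_condition[OF assms]] by blast
  define g where "g a = fst (h a)" for a
  have gN: "\<forall>a\<in>A. g a \<in> N a" using h unfolding g_def sdr_def by auto
  have "card {a\<in>A. g a = p} \<le> q" for p
  proof -
    have "h ` {a\<in>A. g a = p} \<subseteq> {p} \<times> {0..<q}" using h unfolding g_def sdr_def by force
    moreover have "inj_on h {a\<in>A. g a = p}" using h unfolding sdr_def by (auto intro: inj_on_subset)
    ultimately have "card {a\<in>A. g a = p} \<le> card ({p} \<times> {0..<q})"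
      by (intro card_inj_on_le) auto
    then show ?thesis by (simp add: card_cartesian_product)
  qed
  then have "\<forall>p\<in>P. card {a\<in>A. g a = p} = q"
    using fibres_exact[OF fA fP _ _ biregular_card[OF assms]] gN N by blast
  then show ?thesis using gN by blast
qed

(* Removing such choices one at a time: every N a can be listed as f a 0, ..., f a (d - 1)
   so that for every position s each point occurs at position s for exactly q members a. *)
lemma balanced_orderings:
  assumes fA: "finite A" and fP: "finite P" and N: "\<forall>a\<in>A. N a \<subseteq> P \<and> card (N a) = d"
    and deg: "\<forall>p\<in>P. card {a\<in>A. p \<in> N a} = d * q"
  shows "\<exists>f. (\<forall>a\<in>A. bij_betw (f a) {0..<d} (N a)) \<and>
             (\<forall>s<d. \<forall>p\<in>P. card {a\<in>A. f a s = p} = q)"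
  using N deg
proof (induction d arbitrary: N)
  case 0
  then have "\<forall>a\<in>A. N a = {}" using fP by (meson card_0_eq finite_subset)
  then show ?case by (auto simp: bij_betw_def)
next
  case (Suc d)
  obtain g where g: "\<forall>a\<in>A. g a \<in> N a" "\<forall>p\<in>P. card {a\<in>A. g a = p} = q"
    using balanced_choice[OF fA fP Suc.prems] by blast
  define N' where "N' a = N a - {g a}" for a
  have N': "\<forall>a\<in>A. N' a \<subseteq> P \<and> card (N' a) = d"
    using Suc.prems g fP unfolding N'_def by (auto simp: card_Diff_singleton_if)
  have deg': "\<forall>p\<in>P. card {a\<in>A. p \<in> N' a} = d * q"
  proof
    fix p assume p: "p \<in> P"
    have split: "{a\<in>A. p \<in> N a} = {a\<in>A. p \<in> N' a} \<union> {a\<in>A. g a = p}"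
      using g unfolding N'_def by auto
    have "card ({a\<in>A. p \<in> N' a} \<union> {a\<in>A. g a = p}) = card {a\<in>A. p \<in> N' a} + card {a\<in>A. g a = p}"
      using fA by (intro card_Un_disjoint) (auto simp: N'_def)
    moreover have "card {a\<in>A. p \<in> N a} = Suc d * q" using Suc.prems(2) p by blast
    ultimately show "card {a\<in>A. p \<in> N' a} = d * q" using split g(2) p by simp
  qed
  obtain f' where f': "\<forall>a\<in>A. bij_betw (f' a) {0..<d} (N' a)"
    "\<forall>s<d. \<forall>p\<in>P. card {a\<in>A. f' a s = p} = q"
    using Suc.IH[OF N' deg'] by blast
  define f where "f a s = (if s = d then g a else f' a s)" for a s
  have "bij_betw (f a) {0..<Suc d} (N a)" if a: "a \<in> A" for a
  proof -
    have "bij_betw (f a) {0..<d} (N' a)"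
      using f' a unfolding f_def by (auto intro: bij_betw_cong[THEN iffD1])
    then have "bij_betw (f a) ({0..<d} \<union> {d}) (N' a \<union> {f a d})"
      by (intro notIn_Un_bij_betw) (auto simp: f_def N'_def)
    moreover have "N' a \<union> {f a d} = N a" using g a unfolding f_def N'_def by auto
    ultimately show ?thesis by (simp add: atLeast0_lessThan_Suc Un_commute)
  qed
  moreover have "\<forall>s<Suc d. \<forall>p\<in>P. card {a\<in>A. f a s = p} = q"
    using f'(2) g(2) unfolding f_def by (auto simp: less_Suc_eq)
  ultimately show ?case by blast
qed

lemma card_supersets_within:
  assumes fB: "finite B" and JB: "J \<subseteq> B" and jt: "card J \<le> t"
  shows "card {T. J \<subseteq> T \<and> T \<subseteq> B \<and> card T = t} = (card B - card J) choose (t - card J)"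
proof -
  have fJ: "finite J" using fB JB finite_subset by blast
  have "bij_betw (\<lambda>U. U \<union> J) {U. U \<subseteq> B - J \<and> card U = t - card J}
          {T. J \<subseteq> T \<and> T \<subseteq> B \<and> card T = t}"
  proof (rule bij_betw_byWitness[where f'="\<lambda>T. T - J"])
    show "(\<lambda>U. U \<union> J) ` {U. U \<subseteq> B - J \<and> card U = t - card J} \<subseteq> {T. J \<subseteq> T \<and> T \<subseteq> B \<and> card T = t}"
    proof safe
      fix U assume U: "U \<subseteq> B - J" "card U = t - card J"
      have "finite U" using U fB finite_subset by blast
      then show "card (U \<union> J) = t" using U fJ jt by (subst card_Un_disjoint) auto
    qed (use JB in auto)
    show "(\<lambda>T. T - J) ` {T. J \<subseteq> T \<and> T \<subseteq> B \<and> card T = t} \<subseteq> {U. U \<subseteq> B - J \<and> card U = t - card J}"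
      using fJ by (auto simp: card_Diff_subset)
  qed auto
  then have "card {T. J \<subseteq> T \<and> T \<subseteq> B \<and> card T = t} = card {U. U \<subseteq> B - J \<and> card U = t - card J}"
    by (simp add: bij_betw_same_card)
  also have "\<dots> = card (B - J) choose (t - card J)" using fB by (simp add: n_subsets)
  finally show ?thesis using JB fJ by (simp add: card_Diff_subset)
qed

lemma design_finite_blocks: "t_design t v k lam X Bs \<Longrightarrow> finite Bs"
  unfolding t_design_def by (meson Pow_iff finite_Pow_iff finite_subset subsetI)

(* Every j-subset J (j \<le> t) lies in lam_j blocks with
   lam_j * C(k - j, t - j) = lam * C(v - j, t - j); counting pairs (T, B) with J \<subseteq> T \<subseteq> B. *)
lemma design_block_count:
  assumes D: "t_design t v k lam X Bs" and JX: "J \<subseteq> X" and jt: "card J \<le> t"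
  shows "card {B\<in>Bs. J \<subseteq> B} * ((k - card J) choose (t - card J))
         = lam * ((v - card J) choose (t - card J))"
proof -
  have fX: "finite X" and cX: "card X = v" and BX: "\<forall>B\<in>Bs. B \<subseteq> X \<and> card B = k"
    and lam: "\<forall>T. T \<subseteq> X \<and> card T = t \<longrightarrow> card {B\<in>Bs. T \<subseteq> B} = lam"
    using D unfolding t_design_def by auto
  define TJ where "TJ = {T. J \<subseteq> T \<and> T \<subseteq> X \<and> card T = t}"
  define BJ where "BJ = {B\<in>Bs. J \<subseteq> B}"
  have fTJ: "finite TJ" unfolding TJ_def using fX by (auto intro: finite_subset[of _ "Pow X"])
  have fBJ: "finite BJ" unfolding BJ_def using design_finite_blocks[OF D] by auto
  have "lam * card TJ = (\<Sum>T\<in>TJ. card {B\<in>BJ. T \<subseteq> B})"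
  proof -
    have "\<forall>T\<in>TJ. {B\<in>BJ. T \<subseteq> B} = {B\<in>Bs. T \<subseteq> B}" unfolding TJ_def BJ_def by auto
    then show ?thesis using lam unfolding TJ_def by simp
  qed
  also have "\<dots> = (\<Sum>B\<in>BJ. card {T\<in>TJ. T \<subseteq> B})" by (rule double_counting[OF fTJ fBJ])
  also have "\<dots> = (\<Sum>B\<in>BJ. (k - card J) choose (t - card J))"
  proof (rule sum.cong[OF refl])
    fix B assume B: "B \<in> BJ"
    then have "B \<subseteq> X" "card B = k" "J \<subseteq> B" using BX unfolding BJ_def by auto
    moreover have "{T\<in>TJ. T \<subseteq> B} = {T. J \<subseteq> T \<and> T \<subseteq> B \<and> card T = t}"
      using \<open>B \<subseteq> X\<close> unfolding TJ_def by auto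
    ultimately show "card {T\<in>TJ. T \<subseteq> B} = (k - card J) choose (t - card J)"
      using card_supersets_within[of B J t] fX jt finite_subset by metis
  qed
  finally show ?thesis
    using card_supersets_within[OF fX JX jt] cX unfolding TJ_def BJ_def by (simp add: mult.commute)
qed

lemma design_is_j_design:
  assumes D: "t_design t v k lam X Bs" and jt: "j \<le> t" and tk: "t \<le> k"
  shows "\<exists>c. (\<forall>J. J \<subseteq> X \<and> card J = j \<longrightarrow> card {B\<in>Bs. J \<subseteq> B} = c) \<and>
             c * (v choose j) = card Bs * (k choose j)"
proof -
  have fX: "finite X" and cX: "card X = v" and BX: "\<forall>B\<in>Bs. B \<subseteq> X \<and> card B = k"
    using D unfolding t_design_def by auto
  define c where "c = lam * ((v - j) choose (t - j)) div ((k - j) choose (t - j))"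
  have const: "\<forall>J. J \<subseteq> X \<and> card J = j \<longrightarrow> card {B\<in>Bs. J \<subseteq> B} = c"
  proof (intro allI impI)
    fix J assume "J \<subseteq> X \<and> card J = j"
    then have "card {B\<in>Bs. J \<subseteq> B} * ((k - j) choose (t - j)) = lam * ((v - j) choose (t - j))"
      using design_block_count[OF D] jt by auto
    moreover have "(k - j) choose (t - j) > 0" using jt tk by simp
    ultimately show "card {B\<in>Bs. J \<subseteq> B} = c" unfolding c_def by (metis nonzero_mult_div_cancel_right not_gr0)
  qed
  define A where "A = {J. J \<subseteq> X \<and> card J = j}"
  have fA: "finite A" unfolding A_def using fX by (auto intro: finite_subset[of _ "Pow X"])
  have "c * card A = (\<Sum>J\<in>A. card {B\<in>Bs. J \<subseteq> B})"
    using const unfolding A_def by simp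
  also have "\<dots> = (\<Sum>B\<in>Bs. card {J\<in>A. J \<subseteq> B})"
    by (rule double_counting[OF fA design_finite_blocks[OF D]])
  also have "\<dots> = (\<Sum>B\<in>Bs. k choose j)"
  proof (rule sum.cong[OF refl])
    fix B assume B: "B \<in> Bs"
    then have "{J\<in>A. J \<subseteq> B} = {J. J \<subseteq> B \<and> card J = j}" using BX unfolding A_def by auto
    moreover have "finite B" using B BX fX finite_subset by blast
    ultimately show "card {J\<in>A. J \<subseteq> B} = k choose j" using B BX by (simp add: n_subsets)
  qed
  finally have "c * (v choose j) = card Bs * (k choose j)"
    using fX cX unfolding A_def by (simp add: n_subsets mult.commute)
  then show ?thesis using const by blast
qed

lemma design_image:
  assumes D: "t_design t v k lam X Bs" and inj: "inj_on \<phi> X"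
  shows "t_design t v k lam (\<phi> ` X) ((`) \<phi> ` Bs)" and "card ((`) \<phi> ` Bs) = card Bs"
proof -
  have fX: "finite X" and cX: "card X = v" and BX: "\<forall>B\<in>Bs. B \<subseteq> X \<and> card B = k"
    and lam: "\<forall>T. T \<subseteq> X \<and> card T = t \<longrightarrow> card {B\<in>Bs. T \<subseteq> B} = lam"
    using D unfolding t_design_def by auto
  have injB: "inj_on ((`) \<phi>) Bs"
    using inj_on_image_Pow[OF inj] BX by (auto intro: inj_on_subset)
  then show "card ((`) \<phi> ` Bs) = card Bs" by (rule card_image)
  have "card {B'\<in>(`) \<phi> ` Bs. T \<subseteq> B'} = lam" if T: "T \<subseteq> \<phi> ` X" "card T = t" for T
  proof -
    define T' where "T' = {x\<in>X. \<phi> x \<in> T}"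
    have T'X: "T' \<subseteq> X" and TT': "T = \<phi> ` T'" using T unfolding T'_def by auto
    have "card T' = t" using T TT' T'X inj by (metis card_image inj_on_subset)
    moreover have "T \<subseteq> \<phi> ` B \<longleftrightarrow> T' \<subseteq> B" if "B \<in> Bs" for B
    proof -
      have "B \<subseteq> X" using that BX by auto
      then show ?thesis using T'X inj unfolding TT'
        by (auto simp: image_subset_iff) (metis inj_on_image_mem_iff subsetD)
    qed
    then have "{B'\<in>(`) \<phi> ` Bs. T \<subseteq> B'} = (`) \<phi> ` {B\<in>Bs. T' \<subseteq> B}" by auto
    moreover have "card ((`) \<phi> ` {B\<in>Bs. T' \<subseteq> B}) = card {B\<in>Bs. T' \<subseteq> B}"
      using injB by (intro card_image) (auto intro: inj_on_subset)
    ultimately show ?thesis using lam T'X by simp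
  qed
  moreover have "\<forall>B'\<in>(`) \<phi> ` Bs. B' \<subseteq> \<phi> ` X \<and> card B' = k"
    using BX inj by (auto simp: card_image inj_on_subset)
  ultimately show "t_design t v k lam (\<phi> ` X) ((`) \<phi> ` Bs)"
    using fX cX inj unfolding t_design_def by (simp add: card_image)
qed

lemma design_relabel_nat:
  assumes D: "t_design t v k lam X Bs"
  obtains M :: "nat set" and Bs' :: "nat set set"
  where "t_design t v k lam M Bs'" and "card Bs' = card Bs"
proof -
  obtain \<phi> :: "'a \<Rightarrow> nat" where "inj_on \<phi> X"
    using D unfolding t_design_def by (meson bij_betw_def ex_bij_betw_finite_nat)
  then show ?thesis using design_image[OF D] that by blast
qed

(* If v divides b, the blocks of a t-design (t \<ge> 1) can be ordered so that every point occurs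
   in every position in exactly b / v blocks: apply balanced_orderings to the point-block
   incidence graph, whose point degree is the replication number r = k * b / v. *)
lemma design_balanced_orderings:
  assumes D: "t_design t v k lam X Bs" and t1: "1 \<le> t" and tk: "t \<le> k"
    and dvd: "v dvd card Bs"
  shows "\<exists>f. (\<forall>B\<in>Bs. bij_betw (f B) {0..<k} B) \<and>
             (\<forall>s<k. \<forall>p\<in>X. card {B\<in>Bs. f B s = p} = card Bs div v)"
proof -
  have fX: "finite X" and cX: "card X = v" and BX: "\<forall>B\<in>Bs. B \<subseteq> X \<and> card B = k"
    using D unfolding t_design_def by auto
  obtain r where r: "\<forall>J. J \<subseteq> X \<and> card J = 1 \<longrightarrow> card {B\<in>Bs. J \<subseteq> B} = r"
    and r_eq: "r * v = card Bs * k"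
    using design_is_j_design[OF D t1 tk] by auto
  have "card {B\<in>Bs. p \<in> id B} = k * (card Bs div v)" if p: "p \<in> X" for p
  proof -
    have "v > 0" using p fX cX card_gt_0_iff by blast
    have "r * v = (k * (card Bs div v)) * v" using r_eq dvd by (simp add: ac_simps)
    then have "r = k * (card Bs div v)" using \<open>v > 0\<close> by simp
    moreover have "card {B\<in>Bs. {p} \<subseteq> B} = r" using r[rule_format, of "{p}"] p by simp
    ultimately show ?thesis by simp
  qed
  then show ?thesis
    using balanced_orderings[OF design_finite_blocks[OF D] fX, of id k] BX by auto
qed

lemma card_pullback:
  assumes "bij_betw \<beta> E Bs"
  shows "card {e\<in>E. P (\<beta> e)} = card {B\<in>Bs. P B}"
proof -
  have "\<beta> ` {e\<in>E. P (\<beta> e)} = {B\<in>Bs. P B}" using assms by (auto simp: bij_betw_def)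
  moreover have "inj_on \<beta> {e\<in>E. P (\<beta> e)}" using assms by (auto simp: bij_betw_def intro: inj_on_subset)
  ultimately show ?thesis by (metis card_image)
qed

lemma ordered_block_system:
  assumes \<beta>: "bij_betw \<beta> E Bs" and f: "\<forall>B\<in>Bs. bij_betw (f B) S B \<and> B \<subseteq> M"
    and fin: "finite S" "finite M" "finite E"
  shows "auth_system S M E (\<lambda>e. f (\<beta> e))" and "bij_betw (\<lambda>e. f (\<beta> e) ` S) E Bs"
proof -
  have \<beta>E: "\<beta> e \<in> Bs" if "e \<in> E" for e using \<beta> that by (auto simp: bij_betw_def)
  have img: "f (\<beta> e) ` S = \<beta> e" if "e \<in> E" for e using f \<beta>E[OF that] by (auto simp: bij_betw_def)
  show bij: "bij_betw (\<lambda>e. f (\<beta> e) ` S) E Bs"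
    using bij_betw_cong[of E "\<lambda>e. f (\<beta> e) ` S" \<beta> Bs] img \<beta> by simp
  have "inj_on (\<lambda>e. restrict (f (\<beta> e)) S) E"
  proof (rule inj_onI)
    fix e e' assume "e \<in> E" "e' \<in> E" "restrict (f (\<beta> e)) S = restrict (f (\<beta> e')) S"
    then show "e = e'" using bij by (metis bij_betw_def image_restrict_eq inj_onD)
  qed
  moreover have "\<forall>e\<in>E. inj_on (f (\<beta> e)) S \<and> f (\<beta> e) ` S \<subseteq> M"
    using f \<beta>E img by (auto simp: bij_betw_def)
  ultimately show "auth_system S M E (\<lambda>e. f (\<beta> e))" using fin unfolding auth_system_def by blast
qed

lemma valid_rules_count:
  assumes fS: "finite S" and fE: "finite E" and inj: "\<forall>e\<in>E. inj_on (enc e) S"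
  shows "card {e\<in>E. m \<in> enc e ` S} = (\<Sum>s\<in>S. card {e\<in>E. enc e s = m})"
proof -
  have "card {s\<in>S. enc e s = m} = (if m \<in> enc e ` S then 1 else 0)" if "e \<in> E" for e
  proof (cases "m \<in> enc e ` S")
    case True
    then obtain s0 where "s0 \<in> S" "enc e s0 = m" by auto
    then have "{s\<in>S. enc e s = m} = {s0}" using inj that by (auto dest: inj_onD)
    then show ?thesis using True by simp
  next
    case False
    then have "{s\<in>S. enc e s = m} = {}" by blast
    then have "card {s\<in>S. enc e s = m} = 0" by (simp only: card.empty)
    then show ?thesis using False by simp
  qed
  then have "(\<Sum>e\<in>E. card {s\<in>S. enc e s = m}) = card {e\<in>E. m \<in> enc e ` S}"
    using fE by (simp add: sum.inter_filter[symmetric])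
  then show ?thesis using double_counting[OF fS fE, of "\<lambda>s e. enc e s = m"] by simp
qed

lemma perfect_secrecy_uniform:
  assumes fS: "finite S" and fE: "finite E" and inj: "\<forall>e\<in>E. inj_on (enc e) S"
    and balanced: "\<forall>m\<in>M. \<forall>s\<in>S. \<forall>s'\<in>S. card {e\<in>E. enc e s = m} = card {e\<in>E. enc e s' = m}"
  shows "perfect_secrecy S M E enc (\<lambda>_. 1 / real (card E)) (\<lambda>_. 1 / real (card S))"
  unfolding perfect_secrecy_def
proof (intro ballI)
  fix s m assume s: "s \<in> S" and m: "m \<in> M"
  have "(\<Sum>s'\<in>S. card {e\<in>E. enc e s' = m}) = (\<Sum>s'\<in>S. card {e\<in>E. enc e s = m})"
    by (rule sum.cong[OF refl]) (use balanced s m in blast)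
  then have "card {e\<in>E. m \<in> enc e ` S} = card S * card {e\<in>E. enc e s = m}"
    using valid_rules_count[OF fS fE inj] by simp
  moreover have "card S > 0" using s fS card_gt_0_iff by blast
  ultimately show "(\<Sum>e\<in>{e\<in>E. enc e s = m}. 1 / real (card E)) =
      (\<Sum>e\<in>{e\<in>E. m \<in> enc e ` S}. 1 / real (card E) * (1 / real (card S)))"
    by simp
qed

lemma spoof_joint_uniform:
  assumes inj: "\<forall>e\<in>E. inj_on (enc e) S"
  shows "spoof_joint S E enc (\<lambda>_. 1 / real (card E)) (\<lambda>T. 1 / real (card S choose card T)) Y m
       = real (card {e\<in>E. insert m Y \<subseteq> enc e ` S}) / (real (card E) * real (card S choose card Y))"
proof -
  have "card (the_inv_into S (enc e) ` Y) = card Y" if "e \<in> E" "Y \<subseteq> enc e ` S" for e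
    using inj that by (intro card_image inj_on_subset[OF inj_on_the_inv_into]) auto
  then have "spoof_joint S E enc (\<lambda>_. 1 / real (card E)) (\<lambda>T. 1 / real (card S choose card T)) Y m
      = (\<Sum>e\<in>{e\<in>E. insert m Y \<subseteq> enc e ` S}. 1 / (real (card E) * real (card S choose card Y)))"
    unfolding spoof_joint_def by (intro sum.cong) auto
  then show ?thesis by simp
qed

(* If every (i + 1)-set of messages is valid under exactly c rules, all spoofing strategies of
   order i are equally good and the deception probability is C(card M, i) * c / (card E * C(card S, i)). *)
lemma deception_prob_balanced:
  assumes inj: "\<forall>e\<in>E. inj_on (enc e) S" and fM: "finite M" and i: "i < card M"
    and count: "\<forall>Z. Z \<subseteq> M \<and> card Z = Suc i \<longrightarrow> card {e\<in>E. Z \<subseteq> enc e ` S} = c"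
  shows "deception_prob S M E enc (\<lambda>_. 1 / real (card E)) (\<lambda>T. 1 / real (card S choose card T)) i
       = real (card M choose i) * real c / (real (card E) * real (card S choose i))"
proof -
  define val where "val = real c / (real (card E) * real (card S choose i))"
  have "Max ((\<lambda>m. spoof_joint S E enc (\<lambda>_. 1 / real (card E))
               (\<lambda>T. 1 / real (card S choose card T)) Y m) ` (M - Y)) = val"
    if Y: "Y \<subseteq> M" "card Y = i" for Y
  proof -
    have spoof_const: "spoof_joint S E enc (\<lambda>_. 1 / real (card E))
               (\<lambda>T. 1 / real (card S choose card T)) Y m = val" if m: "m \<in> M - Y" for m
    proof -
      have "card (insert m Y) = Suc i" using m Y fM finite_subset by fastforce
      then have "card {e\<in>E. insert m Y \<subseteq> enc e ` S} = c" using count m Y by blast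
      then show ?thesis using spoof_joint_uniform[OF inj] Y(2) unfolding val_def by simp
    qed
    have "finite Y" using Y fM finite_subset by blast
    then have "card (M - Y) > 0" using Y i by (simp add: card_Diff_subset)
    then have "M - Y \<noteq> {}" by (metis card.empty less_irrefl)
    then have "(\<lambda>m. spoof_joint S E enc (\<lambda>_. 1 / real (card E))
               (\<lambda>T. 1 / real (card S choose card T)) Y m) ` (M - Y) = {val}"
      using spoof_const by auto
    then show ?thesis by simp
  qed
  then have "deception_prob S M E enc (\<lambda>_. 1 / real (card E)) (\<lambda>T. 1 / real (card S choose card T)) i
      = (\<Sum>Y\<in>{Y. Y \<subseteq> M \<and> card Y = i}. val)"
    unfolding deception_prob_def by (intro sum.cong) auto
  then show ?thesis using fM by (simp add: n_subsets val_def)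
qed

lemma binomial_ratio:
  assumes c: "c * (v choose Suc i) = b * (k choose Suc i)" and ik: "i < k" and kv: "k \<le> v"
    and b: "b > 0"
  shows "real (v choose i) * real c / (real b * real (k choose i))
         = (real k - real i) / (real v - real i)"
proof -
  have absorb: "Suc i * (n choose Suc i) = (n - i) * (n choose i)" for n
    using binomial_absorb_comp[of n i] binomial_absorption[of i n] by simp
  have "Suc i * (c * (v choose Suc i)) = Suc i * (b * (k choose Suc i))" using c by simp
  then have "c * (Suc i * (v choose Suc i)) = b * (Suc i * (k choose Suc i))"
    by (simp only: mult.left_commute)
  then have "c * ((v - i) * (v choose i)) = b * ((k - i) * (k choose i))" by (simp only: absorb)
  then have "real (c * ((v - i) * (v choose i))) = real (b * ((k - i) * (k choose i)))"
    by (simp only:)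
  then have "real c * (real v - real i) * real (v choose i)
             = real b * (real k - real i) * real (k choose i)"
    using ik kv by (simp add: of_nat_diff ac_simps)
  moreover have "real (k choose i) > 0" "real v - real i > 0" using ik kv by auto
  ultimately show ?thesis using b by (simp add: field_simps)
qed

lemma design_fold_secure:
  assumes D: "t_design t v k lam M Bs" and t1: "1 \<le> t" and tk: "t \<le> k" and kv: "k \<le> v"
    and Bs: "Bs \<noteq> {}" and S: "card S = k" and inj: "\<forall>e\<in>E. inj_on (enc e) S"
    and blocks: "bij_betw (\<lambda>e. enc e ` S) E Bs"
  shows "fold_secure S M E enc (\<lambda>_. 1 / real (card E)) (\<lambda>T. 1 / real (card S choose card T)) (t - 1)"
  unfolding fold_secure_def
proof (intro allI impI)
  fix i assume "i \<le> t - 1"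
  then have it: "Suc i \<le> t" using t1 by simp
  have fM: "finite M" and cM: "card M = v" using D unfolding t_design_def by auto
  have cE: "card E = card Bs" using blocks by (rule bij_betw_same_card)
  obtain c where c: "\<forall>Z. Z \<subseteq> M \<and> card Z = Suc i \<longrightarrow> card {B\<in>Bs. Z \<subseteq> B} = c"
    and c_eq: "c * (v choose Suc i) = card Bs * (k choose Suc i)"
    using design_is_j_design[OF D it tk] by blast
  have "\<forall>Z. Z \<subseteq> M \<and> card Z = Suc i \<longrightarrow> card {e\<in>E. Z \<subseteq> enc e ` S} = c"
    using c card_pullback[OF blocks] by simp
  then have "deception_prob S M E enc (\<lambda>_. 1 / real (card E)) (\<lambda>T. 1 / real (card S choose card T)) i
      = real (v choose i) * real c / (real (card Bs) * real (k choose i))"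
    using deception_prob_balanced[OF inj fM] it tk kv cM cE S by simp
  also have "\<dots> = (real k - real i) / (real v - real i)"
    using binomial_ratio[OF c_eq] it tk kv Bs design_finite_blocks[OF D] by (simp add: card_gt_0_iff)
  finally show "deception_prob S M E enc (\<lambda>_. 1 / real (card E)) (\<lambda>T. 1 / real (card S choose card T)) i
      = (real (card S) - real i) / (real (card M) - real i)" using S cM by simp
qed

lemma optimal_iff_lambda_one:
  assumes b: "b * (k choose t) = lam * (v choose t)" and tk: "t \<le> k" and kv: "k \<le> v"
  shows "real b = real (v choose t) / real (k choose t) \<longleftrightarrow> lam = 1"
proof -
  have pos: "real (k choose t) > 0" "real (v choose t) > 0" using tk kv by auto
  have "real b * real (k choose t) = real lam * real (v choose t)"
    using b by (simp only: of_nat_mult[symmetric])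
  then have "real b = real lam * (real (v choose t) / real (k choose t))"
    using pos by (simp add: field_simps)
  then show ?thesis using pos by simp
qed

theorem mainTheorem1:
  fixes t k v lam :: nat and X :: "'a set" and Bs :: "'a set set"
  assumes "1 \<le> t" and "t \<le> k" and "k \<le> v" and "1 \<le> lam"
    and "t_design t v k lam X Bs"
    and "v dvd card Bs"
  shows "\<exists>(S :: nat set) (M :: nat set) (E :: nat set) (enc :: nat \<Rightarrow> nat \<Rightarrow> nat).
           auth_system S M E enc \<and> card S = k \<and> card M = v \<and> card E = card Bs \<and>
           perfect_secrecy S M E enc (\<lambda>_. 1 / real (card E)) (\<lambda>_. 1 / real (card S)) \<and>
           fold_secure S M E enc (\<lambda>_. 1 / real (card E))
             (\<lambda>T. 1 / real (card S choose card T)) (t - 1) \<and>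
           (optimal_system S M E t \<longleftrightarrow> lam = 1)"
proof -
  obtain M :: "nat set" and Bs' :: "nat set set"
    where D: "t_design t v k lam M Bs'" and cB: "card Bs' = card Bs"
    using design_relabel_nat[OF assms(5)] .
  have fM: "finite M" and cM: "card M = v" and BM: "\<forall>B\<in>Bs'. B \<subseteq> M"
    using D unfolding t_design_def by auto
  obtain f where f: "\<forall>B\<in>Bs'. bij_betw (f B) {0..<k} B"
    and balanced: "\<forall>s<k. \<forall>p\<in>M. card {B\<in>Bs'. f B s = p} = card Bs div v"
    using design_balanced_orderings[OF D assms(1,2)] assms(6) cB by auto
  obtain \<beta> where \<beta>: "bij_betw \<beta> {0..<card Bs} Bs'"
    using ex_bij_betw_nat_finite[OF design_finite_blocks[OF D]] cB by auto
  define S E enc where "S = {0..<k}" and "E = {0..<card Bs}" and "enc e = f (\<beta> e)" for e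
  have auth: "auth_system S M E enc" and blocks: "bij_betw (\<lambda>e. enc e ` S) E Bs'"
    using ordered_block_system[OF \<beta>, of f S M] f BM fM unfolding S_def E_def enc_def by auto
  have inj: "\<forall>e\<in>E. inj_on (enc e) S" using auth unfolding auth_system_def by blast
  have secrecy: "perfect_secrecy S M E enc (\<lambda>_. 1 / real (card E)) (\<lambda>_. 1 / real (card S))"
    using perfect_secrecy_uniform[OF _ _ inj] card_pullback[OF \<beta>, of "\<lambda>B. f B _ = _"] balanced
    unfolding S_def E_def enc_def by simp
  have b: "card Bs' * (k choose t) = lam * (v choose t)"
    using design_block_count[OF D, of "{}"] by simp
  then have "Bs' \<noteq> {}" using assms(2-4) by auto
  then have secure: "fold_secure S M E enc (\<lambda>_. 1 / real (card E)) (\<lambda>T. 1 / real (card S choose card T)) (t - 1)"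
    using design_fold_secure[OF D assms(1-3) _ _ inj blocks] unfolding S_def by simp
  have optimal: "optimal_system S M E t \<longleftrightarrow> lam = 1"
    using optimal_iff_lambda_one[OF b assms(2,3)] cB cM unfolding optimal_system_def S_def E_def by simp
  show ?thesis
    by (intro exI[of _ S] exI[of _ M] exI[of _ E] exI[of _ enc])
       (use auth secrecy secure optimal cM cB in \<open>auto simp: S_def E_def\<close>)
qed

end
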